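(* Let $M=[a_{ij},b_{ij}]_{i,j\in\{1,2\}}$ and $\widehat M=[\hat a_{ij},\hat b_{ij}]_{i,j\in\{1,2\}}$ be $2\times2$ 2-person normal form game matrices and put $c_{ij}=\hat a_{ij}-a_{ij}$. Then $\widehat M$ can be obtained from $M$ by an OI-transformation if and only if $a_{ij}+b_{ij}=\hat a_{ij}+\hat b_{ij}$ for all $i,j\in\{1,2\}$ and $c_{11}+c_{22}=c_{12}+c_{21}$.
   Context: A 2-person normal form game matrix of dimensions $n\times m$ is $M=[a_{ij},b_{ij}]_{i\le n,\,j\le m}$, where $(a_{ij},b_{ij})\in\mathbb{R}^2$ are the payoffs of the row player $A$ and column player $B$ when $A$ plays strategy $A_i$ and $B$ plays $B_j$. A preplay offer by $A$ to $B$ of amount $\delta\ge 0$ contingent on $B_j$ replaces $(a_{ij},b_{ij})$ by $(a_{ij}-\delta,b_{ij}+\delta)$ for every $i$ (other entries unchanged); a preplay offer by $B$ to $A$ of amount $\delta\ge0$ contingent on $A_i$ replaces $(a_{ij},b_{ij})$ by $(a_{ij}+\delta,b_{ij}-\delta)$ for every $j$. Each such map is a POI-transformation; an OI-transformation is a composition of finitely many POI-transformations (all amounts non-negative). *)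

theory Defs
  imports Complex_Main "HOL-Library.Numeral_Type"
begin

text \<open>A 2-person normal form game with row strategies indexed by the finite type 'r
and column strategies indexed by the finite type 'c: entry (i,j) is the payoff pair
(a_ij, b_ij) of the row player A and the column player B.\<close>
type_synonym ('r, 'c) game = "'r \<Rightarrow> 'c \<Rightarrow> real \<times> real"

definition offer_A :: "'c \<Rightarrow> real \<Rightarrow> ('r, 'c) game \<Rightarrow> ('r, 'c) game" where
  "offer_A j d M = (\<lambda>i j'. if j' = j then (fst (M i j') - d, snd (M i j') + d) else M i j')"

definition offer_B :: "'r \<Rightarrow> real \<Rightarrow> ('r, 'c) game \<Rightarrow> ('r, 'c) game" where
  "offer_B i d M = (\<lambda>i' j. if i' = i then (fst (M i' j) + d, snd (M i' j) - d) else M i' j)"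

inductive POI :: "('r, 'c) game \<Rightarrow> ('r, 'c) game \<Rightarrow> bool" where
  POI_A: "d \<ge> 0 \<Longrightarrow> POI M (offer_A j d M)"
| POI_B: "d \<ge> 0 \<Longrightarrow> POI M (offer_B i d M)"

definition OI :: "('r, 'c) game \<Rightarrow> ('r, 'c) game \<Rightarrow> bool" where
  "OI M M' = POI\<^sup>*\<^sup>* M M'"

end

theory Submission
  imports Defs
begin

text \<open>
  A preplay offer moves money between the players, so it never changes the
  sum of the two payoffs in any cell; and it shifts the row player's payoffs by an amount
  that depends only on the row (offers by B) or only on the column (offers by A).  Hence
  along any OI-transformation the change of A's payoffs has the form  c i j = u i - v j.
  Conversely, if the entry sums agree and  c i j = u i - v j  for some real u, v, we may
  raise u and v by a common constant to make them non-negative, then let B pay u i on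
  every row and A pay v j on every column; this reaches the target game.  For 2x2 games, a matrix c splits as u i - v j exactly when
  c 0 0 + c 1 1 = c 0 1 + c 1 0 (lemma split_2x2_iff), which yields corollary1.
\<close>

definition same_sums :: "('r, 'c) game \<Rightarrow> ('r, 'c) game \<Rightarrow> bool" where
  "same_sums M M' \<longleftrightarrow> (\<forall>i j. fst (M i j) + snd (M i j) = fst (M' i j) + snd (M' i j))"

definition row_col_split :: "('r \<Rightarrow> 'c \<Rightarrow> real) \<Rightarrow> bool" where
  "row_col_split c \<longleftrightarrow> (\<exists>u v. \<forall>i j. c i j = u i - v j)"

definition gain_A :: "('r, 'c) game \<Rightarrow> ('r, 'c) game \<Rightarrow> 'r \<Rightarrow> 'c \<Rightarrow> real" where
  "gain_A M M' i j = fst (M' i j) - fst (M i j)"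

text \<open>Both invariants hold along every OI-transformation: an offer by A on column j adds
  its amount to the column part, an offer by B on row i adds it to the row part.\<close>
lemma OI_invariants:
  assumes "OI M M'"
  shows "same_sums M M' \<and> row_col_split (gain_A M M')"
  using assms unfolding OI_def
proof (induction rule: rtranclp_induct)
  case base
  have "\<forall>i j. gain_A M M i j = (\<lambda>_. 0) i - (\<lambda>_. 0) j" by (simp add: gain_A_def)
  then show ?case by (auto simp: same_sums_def row_col_split_def)
next
  case (step M1 M2)
  from step.IH obtain u v where sums: "same_sums M M1"
    and uv: "\<forall>i j. gain_A M M1 i j = u i - v j"
    by (auto simp: row_col_split_def)
  from step.hyps(2) show ?case
  proof cases
    case (POI_A d j0)
    have "\<forall>i j. gain_A M M2 i j = u i - (v(j0 := v j0 + d)) j"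
      using uv by (auto simp: POI_A gain_A_def offer_A_def)
    then have "row_col_split (gain_A M M2)" unfolding row_col_split_def by blast
    moreover have "same_sums M M2"
      using sums by (auto simp: POI_A same_sums_def offer_A_def)
    ultimately show ?thesis by blast
  next
    case (POI_B d i0)
    have "\<forall>i j. gain_A M M2 i j = (u(i0 := u i0 + d)) i - v j"
      using uv by (auto simp: POI_B gain_A_def offer_B_def)
    then have "row_col_split (gain_A M M2)" unfolding row_col_split_def by blast
    moreover have "same_sums M M2"
      using sums by (auto simp: POI_B same_sums_def offer_B_def)
    ultimately show ?thesis by blast
  qed
qed

definition pay_rows :: "'r set \<Rightarrow> ('r \<Rightarrow> real) \<Rightarrow> ('r, 'c) game \<Rightarrow> ('r, 'c) game" where
  "pay_rows S a M = (\<lambda>i j. if i \<in> S then (fst (M i j) + a i, snd (M i j) - a i) else M i j)"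

definition pay_columns :: "'c set \<Rightarrow> ('c \<Rightarrow> real) \<Rightarrow> ('r, 'c) game \<Rightarrow> ('r, 'c) game" where
  "pay_columns T b M = (\<lambda>i j. if j \<in> T then (fst (M i j) - b j, snd (M i j) + b j) else M i j)"

lemma pay_rows_insert:
  "x \<notin> F \<Longrightarrow> pay_rows (insert x F) a M = offer_B x (a x) (pay_rows F a M)"
  by (intro ext) (simp add: pay_rows_def offer_B_def)

lemma pay_columns_insert:
  "y \<notin> F \<Longrightarrow> pay_columns (insert y F) b M = offer_A y (b y) (pay_columns F b M)"
  by (intro ext) (simp add: pay_columns_def offer_A_def)

lemma pay_rows_reachable:
  assumes "finite S" and "\<forall>i\<in>S. a i \<ge> 0"
  shows "POI\<^sup>*\<^sup>* M (pay_rows S a M)"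
  using assms
proof (induction S rule: finite_induct)
  case empty
  have "pay_rows {} a M = M" by (simp add: pay_rows_def)
  then show ?case by simp
next
  case (insert x F)
  have "POI\<^sup>*\<^sup>* M (pay_rows F a M)" using insert.IH insert.prems by simp
  moreover have "POI (pay_rows F a M) (offer_B x (a x) (pay_rows F a M))"
    using insert.prems by (intro POI_B) simp
  ultimately show ?case
    by (simp add: pay_rows_insert[OF insert.hyps(2)] rtranclp.rtrancl_into_rtrancl)
qed

lemma pay_columns_reachable:
  assumes "finite T" and "\<forall>j\<in>T. b j \<ge> 0"
  shows "POI\<^sup>*\<^sup>* M (pay_columns T b M)"
  using assms
proof (induction T rule: finite_induct)
  case empty
  have "pay_columns {} b M = M" by (simp add: pay_columns_def)
  then show ?case by simp
next
  case (insert y F)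
  have "POI\<^sup>*\<^sup>* M (pay_columns F b M)" using insert.IH insert.prems by simp
  moreover have "POI (pay_columns F b M) (offer_A y (b y) (pay_columns F b M))"
    using insert.prems by (intro POI_A) simp
  ultimately show ?case
    by (simp add: pay_columns_insert[OF insert.hyps(2)] rtranclp.rtrancl_into_rtrancl)
qed

lemma nonneg_split:
  fixes u :: "'r::finite \<Rightarrow> real" and v :: "'c::finite \<Rightarrow> real"
  obtains t where "\<forall>i. u i + t \<ge> 0" and "\<forall>j. v j + t \<ge> 0"
proof
  define su where "su = (\<Sum>i\<in>UNIV. \<bar>u i\<bar>)"
  define sv where "sv = (\<Sum>j\<in>UNIV. \<bar>v j\<bar>)"
  have bound_u: "\<bar>u i\<bar> \<le> su" and bound_v: "\<bar>v j\<bar> \<le> sv" for i j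
    unfolding su_def sv_def by (rule member_le_sum; simp)+
  have sums_nonneg: "0 \<le> su" "0 \<le> sv" unfolding su_def sv_def by (simp_all add: sum_nonneg)
  have "u i + (su + sv) \<ge> 0" "v j + (su + sv) \<ge> 0" for i j
    using sums_nonneg bound_u[of i] bound_v[of j] unfolding abs_le_iff by linarith+
  then show "\<forall>i. u i + (su + sv) \<ge> 0" "\<forall>j. v j + (su + sv) \<ge> 0" by simp_all
qed

text \<open>The converse of the invariants: with equal cell sums and a splitting of A's gain,
  B pays u i + t on each row and then A pays v j + t on each column.\<close>
lemma OI_from_split:
  fixes M M' :: "('r::finite, 'c::finite) game"
  assumes sums: "same_sums M M'" and split: "row_col_split (gain_A M M')"
  shows "OI M M'"
proof -
  from split obtain u v where uv: "\<And>i j. gain_A M M' i j = u i - v j"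
    by (auto simp: row_col_split_def)
  obtain t where t: "\<forall>i. u i + t \<ge> 0" "\<forall>j. v j + t \<ge> 0" by (rule nonneg_split)
  define M1 where "M1 = pay_rows UNIV (\<lambda>i. u i + t) M"
  have "POI\<^sup>*\<^sup>* M M1" unfolding M1_def using t by (intro pay_rows_reachable) simp_all
  moreover have "POI\<^sup>*\<^sup>* M1 (pay_columns UNIV (\<lambda>j. v j + t) M1)"
    using t by (intro pay_columns_reachable) simp_all
  moreover have "pay_columns UNIV (\<lambda>j. v j + t) M1 = M'"
  proof (intro ext)
    fix i j
    have "fst (M' i j) = fst (M i j) + u i - v j" using uv[of i j] by (simp add: gain_A_def)
    moreover have "fst (M i j) + snd (M i j) = fst (M' i j) + snd (M' i j)"
      using sums by (simp add: same_sums_def)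
    ultimately show "pay_columns UNIV (\<lambda>j. v j + t) M1 i j = M' i j"
      by (simp add: M1_def pay_rows_def pay_columns_def prod_eq_iff)
  qed
  ultimately show ?thesis unfolding OI_def by (metis rtranclp_trans)
qed

theorem OI_iff_split:
  fixes M M' :: "('r::finite, 'c::finite) game"
  shows "OI M M' \<longleftrightarrow> same_sums M M' \<and> row_col_split (gain_A M M')"
  using OI_invariants OI_from_split by blast

lemma two_cases: "(i::2) = 0 \<or> i = 1"
proof (induct i)
  case (of_int z)
  then have "z = 0 \<or> z = 1" by simp arith
  then show ?case by auto
qed

text \<open>A 2x2 matrix splits into row part minus column part iff its two diagonal sums
  agree; the splitting is u i = c i 0, v j = c 0 0 - c 0 j.\<close>
lemma split_2x2_iff:
  fixes c :: "2 \<Rightarrow> 2 \<Rightarrow> real"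
  shows "row_col_split c \<longleftrightarrow> c 0 0 + c 1 1 = c 0 1 + c 1 0"
proof
  assume "row_col_split c"
  then obtain u v where "\<forall>i j. c i j = u i - v j" by (auto simp: row_col_split_def)
  then show "c 0 0 + c 1 1 = c 0 1 + c 1 0" by simp
next
  assume diag: "c 0 0 + c 1 1 = c 0 1 + c 1 0"
  have split: "c i j = c i 0 - (c 0 0 - c 0 j)" for i j
    using two_cases[of i] two_cases[of j] diag by auto
  show "row_col_split c"
    unfolding row_col_split_def
    by (intro exI[of _ "\<lambda>i. c i 0"] exI[of _ "\<lambda>j. c 0 0 - c 0 j"] allI) (rule split)
qed

theorem corollary1:
  fixes M Mh :: "(2, 2) game"
  shows "OI M Mh \<longleftrightarrow>
    ((\<forall>i j. fst (M i j) + snd (M i j) = fst (Mh i j) + snd (Mh i j)) \<and>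
     (fst (Mh 0 0) - fst (M 0 0)) + (fst (Mh 1 1) - fst (M 1 1)) =
     (fst (Mh 0 1) - fst (M 0 1)) + (fst (Mh 1 0) - fst (M 1 0)))"
  unfolding OI_iff_split split_2x2_iff same_sums_def gain_A_def ..

end
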